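(* Let $I\subset\mathbb{R}$ be an uncountable set. Then the set $\mathrm{NBF}(I)$ of unbounded real-valued functions on $I$ is $2^{\mathrm{card}(I)}$-lineable; that is, there is a vector subspace $V$ of $\mathbb{R}^I$ of dimension $2^{\mathrm{card}(I)}$ such that every nonzero $f\in V$ is unbounded on $I$.
   Context: For a cardinal $\mu$, a set $M$ of functions is called $\mu$-lineable if $M\cup\{0\}$ contains a vector space of dimension $\mu$. *)

theory Defs
  imports "HOL-Analysis.Analysis" "HOL-Library.Equipollence" "HOL-Library.Function_Algebras"
begin

definition fscale :: "real \<Rightarrow> ('a \<Rightarrow> real) \<Rightarrow> ('a \<Rightarrow> real)" where
  "fscale c f = (\<lambda>x. c * f x)"

text \<open>The space R^I, represented by functions real => real vanishing outside I.\<close>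
definition RI :: "real set \<Rightarrow> (real \<Rightarrow> real) set" where
  "RI I = {f. \<forall>x. x \<notin> I \<longrightarrow> f x = 0}"

end

theory Submission
  imports Defs
begin

text \<open>Since I is infinite, it contains an injective copy of the set of codes (n, F, G) with
  n a natural number and F, G finite subsets of I. For A \<subseteq> I let f_A take the value n at the
  code (n, F, G) if A \<inter> F = G, and 0 elsewhere. Given finitely many distinct A_i, choose a
  finite F that separates A_1 from the others by their traces on F; at the code (n, F, A_1 \<inter> F)
  the combination \<Sum> c_i f_A_i takes the value n c_1. Hence the 2^|I| functions f_A are
  linearly independent, and every nonzero combination of them is unbounded.\<close>

lemma fscale_module: "module (fscale :: real \<Rightarrow> ('a \<Rightarrow> real) \<Rightarrow> _)"
  by unfold_locales (auto simp: fscale_def fun_eq_iff algebra_simps)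

lemma fscale_sum_apply: "(\<Sum>b\<in>t. fscale (u b) b) x = (\<Sum>b\<in>t. u b * b x)"
  by (induction t rule: infinite_finite_induct) (simp_all add: fscale_def)

lemma RI_subspace: "module.subspace fscale (RI I)"
proof -
  interpret module fscale by (rule fscale_module)
  show ?thesis by (rule subspaceI) (auto simp: RI_def fscale_def)
qed

context
  fixes B :: "('a \<Rightarrow> real) set" and J :: "'a set"
  assumes scaled_coefficient_attained:
    "\<And>t u b n. finite t \<Longrightarrow> t \<subseteq> B \<Longrightarrow> b \<in> t \<Longrightarrow> \<exists>x\<in>J. (\<Sum>c\<in>t. u c * c x) = real n * u b"
begin

lemma independent_if_scaled_coefficient_attained: "\<not> module.dependent fscale B"
proof
  interpret module fscale by (rule fscale_module)
  assume "dependent B"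
  then obtain t u v where t: "finite t" "t \<subseteq> B" "v \<in> t" "u v \<noteq> 0"
    and zero: "(\<Sum>b\<in>t. fscale (u b) b) = 0"
    unfolding dependent_explicit by blast
  obtain x where "(\<Sum>c\<in>t. u c * c x) = u v"
    using scaled_coefficient_attained[OF t(1-3), of u 1] by auto
  with zero t(4) show False
    by (metis fscale_sum_apply zero_fun_def)
qed

lemma span_nonzero_unbounded_if_scaled_coefficient_attained:
  assumes "f \<in> module.span fscale B" "f \<noteq> 0"
  shows "\<not> bounded (f ` J)"
proof
  interpret module fscale by (rule fscale_module)
  assume "bounded (f ` J)"
  then obtain M where M: "\<And>x. x \<in> J \<Longrightarrow> \<bar>f x\<bar> \<le> M"
    by (auto simp: bounded_iff)
  obtain t u where t: "finite t" "t \<subseteq> B" and f: "f = (\<Sum>b\<in>t. fscale (u b) b)"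
    using assms(1) unfolding span_explicit by blast
  have "\<exists>v\<in>t. u v \<noteq> 0"
  proof (rule ccontr)
    assume "\<not> ?thesis"
    then have "f = 0"
      using f by (simp add: fun_eq_iff fscale_sum_apply)
    with assms(2) show False ..
  qed
  then obtain v where v: "v \<in> t" "u v \<noteq> 0"
    by blast
  obtain n :: nat where n: "M / \<bar>u v\<bar> < n"
    using reals_Archimedean2 by blast
  obtain x where x: "x \<in> J" "f x = n * u v"
    using scaled_coefficient_attained[OF t v(1)] f by (auto simp: fscale_sum_apply)
  have "M < n * \<bar>u v\<bar>"
    using n v(2) by (simp add: field_simps)
  with M[OF x(1)] x(2) show False
    by (simp add: abs_mult)
qed

end

lemma infinite_times_self_eqpoll: "infinite A \<Longrightarrow> A \<times> A \<approx> A"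
  unfolding eqpoll_iff_card_of_ordIso by (rule card_of_Times_same_infinite)

lemma lists_of_length_lepoll:
  assumes "infinite A"
  shows "{xs. set xs \<subseteq> A \<and> length xs = n} \<lesssim> A"
proof (induction n)
  case 0
  have "{xs. set xs \<subseteq> A \<and> length xs = 0} = {[]}"
    by auto
  then show ?case
    using finite_lepoll_infinite[OF assms, of "{[]}"] by simp
next
  case (Suc n)
  have "{xs. set xs \<subseteq> A \<and> length xs = Suc n} \<lesssim> {xs. set xs \<subseteq> A \<and> length xs = n} \<times> A"
    unfolding lists_length_Suc_eq by (rule image_lepoll)
  also have "\<dots> \<lesssim> A \<times> A"
    using Suc.IH by (simp add: times_lepoll_mono)
  also have "\<dots> \<lesssim> A"
    using assms by (simp add: eqpoll_imp_lepoll infinite_times_self_eqpoll)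
  finally show ?case .
qed

lemma lists_lepoll:
  assumes "infinite A"
  shows "lists A \<lesssim> A"
proof -
  have "lists A = (\<Union>n. {xs. set xs \<subseteq> A \<and> length xs = n})"
    by (auto simp: lists_eq_set)
  moreover have "(\<Union>n. {xs. set xs \<subseteq> A \<and> length xs = n}) \<lesssim> A"
    unfolding lepoll_def card_of_ordLeq
    using assms lists_of_length_lepoll[OF assms] infinite_le_lepoll[of A]
    by (intro card_of_UNION_ordLeq_infinite) (auto simp: lepoll_def card_of_ordLeq)
  ultimately show ?thesis
    by simp
qed

lemma Fpow_lepoll:
  assumes "infinite A"
  shows "Fpow A \<lesssim> A"
proof -
  have "Fpow A = set ` lists A"
    unfolding lists_eq_set Fpow_def using finite_list finite_set by blast
  then have "Fpow A \<lesssim> lists A"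
    by (simp add: image_lepoll)
  also have "\<dots> \<lesssim> A"
    using assms by (rule lists_lepoll)
  finally show ?thesis .
qed

lemma nat_times_Fpow_times_Fpow_lepoll:
  assumes "infinite A"
  shows "(UNIV :: nat set) \<times> (Fpow A \<times> Fpow A) \<lesssim> A"
proof -
  have square: "A \<times> A \<lesssim> A"
    using assms by (simp add: eqpoll_imp_lepoll infinite_times_self_eqpoll)
  have "(UNIV :: nat set) \<times> (Fpow A \<times> Fpow A) \<lesssim> A \<times> (A \<times> A)"
    using assms by (intro times_lepoll_mono Fpow_lepoll) (simp flip: infinite_le_lepoll)
  also have "\<dots> \<lesssim> A \<times> A"
    using square by (simp add: times_lepoll_mono)
  also have "\<dots> \<lesssim> A"
    by (fact square)
  finally show ?thesis .
qed

lemma finite_separating_set: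
  assumes "finite S" "S \<subseteq> Pow I" "A\<^sub>0 \<subseteq> I"
  obtains F where "finite F" "F \<subseteq> I" "\<And>A. A \<in> S \<Longrightarrow> A \<inter> F = A\<^sub>0 \<inter> F \<Longrightarrow> A = A\<^sub>0"
proof -
  have "\<forall>A \<in> S - {A\<^sub>0}. \<exists>p \<in> I. p \<in> A \<longleftrightarrow> p \<notin> A\<^sub>0"
    using assms by blast
  then obtain p where p: "\<And>A. A \<in> S - {A\<^sub>0} \<Longrightarrow> p A \<in> I \<and> (p A \<in> A \<longleftrightarrow> p A \<notin> A\<^sub>0)"
    by metis
  show thesis
  proof (rule that)
    show "finite (p ` (S - {A\<^sub>0}))"
      using assms(1) by simp
    show "p ` (S - {A\<^sub>0}) \<subseteq> I"
      using p by blast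
    fix A assume "A \<in> S" "A \<inter> p ` (S - {A\<^sub>0}) = A\<^sub>0 \<inter> p ` (S - {A\<^sub>0})"
    then show "A = A\<^sub>0"
      using p[of A] by blast
  qed
qed

definition trace_codes :: "'a set \<Rightarrow> (nat \<times> 'a set \<times> 'a set) set" where
  "trace_codes I = UNIV \<times> (Fpow I \<times> Fpow I)"

definition trace_fun :: "(nat \<times> 'a set \<times> 'a set \<Rightarrow> 'b) \<Rightarrow> 'a set \<Rightarrow> 'a set \<Rightarrow> 'b \<Rightarrow> real" where
  "trace_fun e I A x =
    (if x \<in> e ` trace_codes I then
       (case inv_into (trace_codes I) e x of (n, F, G) \<Rightarrow> if A \<inter> F = G then real n else 0)
     else 0)"

lemma trace_fun_code:
  assumes "inj_on e (trace_codes I)" "finite F" "F \<subseteq> I" "finite G" "G \<subseteq> I"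
  shows "trace_fun e I A (e (n, F, G)) = (if A \<inter> F = G then real n else 0)"
proof -
  have "(n, F, G) \<in> trace_codes I"
    using assms(2-5) by (simp add: trace_codes_def Fpow_def)
  with assms(1) show ?thesis
    by (simp add: trace_fun_def)
qed

lemma trace_fun_outside: "x \<notin> e ` trace_codes I \<Longrightarrow> trace_fun e I A x = 0"
  by (simp add: trace_fun_def)

lemma inj_on_trace_fun:
  assumes "inj_on e (trace_codes I)"
  shows "inj_on (trace_fun e I) (Pow I)"
proof (rule inj_onI, rule ccontr)
  fix A A' assume A: "A \<in> Pow I" "A' \<in> Pow I" "trace_fun e I A = trace_fun e I A'" "A \<noteq> A'"
  then obtain p where p: "p \<in> I" "p \<in> A \<longleftrightarrow> p \<notin> A'"
    by blast
  have "A \<inter> {p} \<subseteq> I"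
    using p(1) by blast
  then have "trace_fun e I A (e (1, {p}, A \<inter> {p})) \<noteq> trace_fun e I A' (e (1, {p}, A \<inter> {p}))"
    using p by (simp add: trace_fun_code[OF assms] split: if_splits) blast
  with A(3) show False
    by simp
qed

lemma trace_fun_scaled_coefficient_attained:
  assumes e: "inj_on e (trace_codes I)"
    and t: "finite t" "t \<subseteq> trace_fun e I ` Pow I" "b \<in> t"
  shows "\<exists>x \<in> e ` trace_codes I. (\<Sum>c\<in>t. u c * c x) = real n * u b"
proof -
  obtain S where S: "S \<subseteq> Pow I" "inj_on (trace_fun e I) S" "t = trace_fun e I ` S"
    using t(2) by (auto simp: subset_image_inj)
  have "finite S"
    using S(2,3) t(1) finite_image_iff by blast
  obtain A\<^sub>0 where A\<^sub>0: "A\<^sub>0 \<in> S" "b = trace_fun e I A\<^sub>0"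
    using S(3) t(3) by blast
  have "A\<^sub>0 \<subseteq> I"
    using A\<^sub>0(1) S(1) by blast
  obtain F where F: "finite F" "F \<subseteq> I" "\<And>A. A \<in> S \<Longrightarrow> A \<inter> F = A\<^sub>0 \<inter> F \<Longrightarrow> A = A\<^sub>0"
    using finite_separating_set[OF \<open>finite S\<close> S(1) \<open>A\<^sub>0 \<subseteq> I\<close>] by blast
  define x where "x = e (n, F, A\<^sub>0 \<inter> F)"
  have "(n, F, A\<^sub>0 \<inter> F) \<in> trace_codes I"
    using F(1,2) by (auto simp: trace_codes_def Fpow_def)
  then have "x \<in> e ` trace_codes I"
    unfolding x_def by (rule imageI)
  moreover have "(\<Sum>c\<in>t. u c * c x) = (\<Sum>A\<in>S. u (trace_fun e I A) * trace_fun e I A x)"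
    by (simp add: S(2,3) sum.reindex)
  moreover have "\<dots> = (\<Sum>A\<in>S. if A = A\<^sub>0 then u b * real n else 0)"
  proof (rule sum.cong)
    fix A assume "A \<in> S"
    have "trace_fun e I A x = (if A \<inter> F = A\<^sub>0 \<inter> F then real n else 0)"
      unfolding x_def using e F(1,2) by (intro trace_fun_code) auto
    also have "\<dots> = (if A = A\<^sub>0 then real n else 0)"
      using F(3) \<open>A \<in> S\<close> by auto
    finally show "u (trace_fun e I A) * trace_fun e I A x = (if A = A\<^sub>0 then u b * real n else 0)"
      using A\<^sub>0(2) by simp
  qed simp
  moreover have "\<dots> = real n * u b"
    using \<open>finite S\<close> A\<^sub>0(1) by simp
  ultimately show ?thesis
    by auto
qed

theorem lemma3p2:
  fixes I :: "real set"
  assumes "uncountable I"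
  shows "\<exists>V B. V \<subseteq> RI I \<and> module.subspace fscale V
            \<and> B \<subseteq> V \<and> \<not> module.dependent fscale B \<and> module.span fscale B = V
            \<and> B \<approx> Pow I
            \<and> (\<forall>f\<in>V. f \<noteq> 0 \<longrightarrow> \<not> bounded (f ` I))"
proof -
  interpret module "fscale :: real \<Rightarrow> (real \<Rightarrow> real) \<Rightarrow> _"
    by (rule fscale_module)
  obtain e where e: "inj_on e (trace_codes I)" "e ` trace_codes I \<subseteq> I"
    using nat_times_Fpow_times_Fpow_lepoll[OF uncountable_infinite[OF assms]]
    unfolding lepoll_def trace_codes_def by blast
  define B where "B = trace_fun e I ` Pow I"
  have attained: "\<exists>x\<in>I. (\<Sum>c\<in>t. u c * c x) = real n * u b"
    if "finite t" "t \<subseteq> B" "b \<in> t" for t u b n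
    using trace_fun_scaled_coefficient_attained[OF e(1) that[unfolded B_def]] e(2) by blast
  have "B \<subseteq> RI I"
    using e(2) by (force simp: B_def RI_def intro: trace_fun_outside)
  then have "span B \<subseteq> RI I"
    by (simp add: span_minimal RI_subspace)
  moreover have "B \<approx> Pow I"
    unfolding B_def by (rule inj_on_image_eqpoll_self[OF inj_on_trace_fun[OF e(1)]])
  ultimately show ?thesis
    using independent_if_scaled_coefficient_attained[OF attained]
      span_nonzero_unbounded_if_scaled_coefficient_attained[OF attained]
    by (intro exI[of _ "span B"] exI[of _ B]) (simp add: span_superset)
qed

end
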